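(* Let $T$ be a spanning tree, $\mathbf x\in\mathbb R^V$, and $\mathbf b$ a supply vector, and let $\mathbf f_{T,\mathbf x}$ be the associated tree-defined flow. Then $$\mathrm{gap}(\mathbf f_{T,\mathbf x},\mathbf x)=\frac12\sum_{(i,j)\in T}r(i,j)\cdot\frac{\Delta(C(i,j))^2}{R(C(i,j))^2}.$$
   Context: $G=(V,E)$ is a connected undirected graph with resistances $r(e)>0$; $\mathbf b\in\mathbb R^V$ with $\sum_ib(i)=0$; a $\mathbf b$-flow has net outflow $b(i)$ at every $i$ (with $f(j,i)=-f(i,j)$). $\mathcal E(\mathbf f)=\frac12\sum_e r(e)f(e)^2$, $\mathcal B(\mathbf x)=\mathbf b^\top\mathbf x-\frac12\mathbf x^\top\mathbf L\mathbf x$ with $\mathbf L$ the weighted Laplacian $\sum_{ij\in E}\frac1{r(i,j)}(\mathbf e_i-\mathbf e_j)(\mathbf e_i-\mathbf e_j)^\top$, and $\mathrm{gap}(\mathbf f,\mathbf x)=\mathcal E(\mathbf f)-\mathcal B(\mathbf x)$. Root $T$ and direct tree edges toward the root; for a tree edge $(i,j)$, $C(i,j)$ is the vertex set of the component of $T-ij$ containing $i$. For $C\subset V$: $R(C)=(\sum_{e\in\delta(C)}1/r(e))^{-1}$ with $\delta(C)$ the edges with exactly one endpoint in $C$, $b(C)=\sum_{v\in C}b(v)$, $f(C)=\sum_{kl\in E,\,k\in C,\,l\notin C}\frac{x(k)-x(l)}{r(k,l)}$, and $\Delta(C)=(b(C)-f(C))R(C)$. The tree-defined flow $\mathbf f_{T,\mathbf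 x}$ equals $\frac{x(i)-x(j)}{r(i,j)}$ on non-tree edges and, on tree edges, takes the unique values making it a $\mathbf b$-flow. *)

theory Defs
  imports Complex_Main
begin

definition graph_wf :: "'a set \<Rightarrow> 'a set set \<Rightarrow> bool" where
  "graph_wf V E \<longleftrightarrow> finite V \<and> (\<forall>e\<in>E. \<exists>i j. e = {i, j} \<and> i \<noteq> j \<and> i \<in> V \<and> j \<in> V)"

definition reach :: "'a set set \<Rightarrow> 'a \<Rightarrow> 'a \<Rightarrow> bool" where
  "reach F u v \<longleftrightarrow> (u, v) \<in> {(p, q). {p, q} \<in> F}\<^sup>*"

definition connected_on :: "'a set \<Rightarrow> 'a set set \<Rightarrow> bool" where
  "connected_on V F \<longleftrightarrow> (\<forall>u\<in>V. \<forall>v\<in>V. reach F u v)"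

text \<open>A spanning tree: a set of graph edges connecting all vertices that is minimally
  connected (removing any edge disconnects it), i.e. connected and acyclic.\<close>
definition spanning_tree :: "'a set \<Rightarrow> 'a set set \<Rightarrow> 'a set set \<Rightarrow> bool" where
  "spanning_tree V E T \<longleftrightarrow> T \<subseteq> E \<and> connected_on V T \<and> (\<forall>e\<in>T. \<not> connected_on V (T - {e}))"

definition comp :: "'a set \<Rightarrow> 'a set set \<Rightarrow> 'a \<Rightarrow> 'a set" where
  "comp V F v = {u \<in> V. reach F v u}"

text \<open>For a tree edge e (directed toward the root \<rho>), its tail is the endpoint i not in the
  root's component of T - e; C(i,j) is the component of T - e containing i.\<close>
definition tail_toward_root :: "'a set \<Rightarrow> 'a set set \<Rightarrow> 'a \<Rightarrow> 'a set \<Rightarrow> 'a" where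
  "tail_toward_root V T \<rho> e = (THE i. i \<in> e \<and> i \<notin> comp V (T - {e}) \<rho>)"

definition treeC :: "'a set \<Rightarrow> 'a set set \<Rightarrow> 'a \<Rightarrow> 'a set \<Rightarrow> 'a set" where
  "treeC V T \<rho> e = comp V (T - {e}) (tail_toward_root V T \<rho> e)"

definition cut :: "'a set set \<Rightarrow> 'a set \<Rightarrow> 'a set set" where
  "cut E C = {e \<in> E. card (e \<inter> C) = 1}"

definition Rcut :: "'a set set \<Rightarrow> ('a set \<Rightarrow> real) \<Rightarrow> 'a set \<Rightarrow> real" where
  "Rcut E r C = inverse (\<Sum>e\<in>cut E C. 1 / r e)"

definition bset :: "('a \<Rightarrow> real) \<Rightarrow> 'a set \<Rightarrow> real" where
  "bset b C = (\<Sum>v\<in>C. b v)"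

definition fset :: "'a set \<Rightarrow> 'a set set \<Rightarrow> ('a set \<Rightarrow> real) \<Rightarrow> ('a \<Rightarrow> real) \<Rightarrow> 'a set \<Rightarrow> real" where
  "fset V E r x C = (\<Sum>k\<in>C. \<Sum>l\<in>{l \<in> V - C. {k, l} \<in> E}. (x k - x l) / r {k, l})"

definition Delta :: "'a set \<Rightarrow> 'a set set \<Rightarrow> ('a set \<Rightarrow> real) \<Rightarrow> ('a \<Rightarrow> real) \<Rightarrow> ('a \<Rightarrow> real) \<Rightarrow> 'a set \<Rightarrow> real" where
  "Delta V E r b x C = (bset b C - fset V E r x C) * Rcut E r C"

definition is_bflow :: "'a set \<Rightarrow> 'a set set \<Rightarrow> ('a \<Rightarrow> real) \<Rightarrow> ('a \<Rightarrow> 'a \<Rightarrow> real) \<Rightarrow> bool" where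
  "is_bflow V E b f \<longleftrightarrow> (\<forall>i j. {i, j} \<in> E \<longrightarrow> f j i = - f i j) \<and>
     (\<forall>i\<in>V. (\<Sum>j\<in>{j \<in> V. {i, j} \<in> E}. f i j) = b i)"

text \<open>Tree-defined flow: (x i - x j)/r on non-tree edges, the unique b-flow values on tree
  edges (and 0 on non-edges, which are not part of the flow).\<close>
definition tree_flow :: "'a set \<Rightarrow> 'a set set \<Rightarrow> ('a set \<Rightarrow> real) \<Rightarrow> ('a \<Rightarrow> real) \<Rightarrow> 'a set set \<Rightarrow> ('a \<Rightarrow> real) \<Rightarrow> 'a \<Rightarrow> 'a \<Rightarrow> real" where
  "tree_flow V E r b T x = (THE f. is_bflow V E b f \<and>
     (\<forall>i j. {i, j} \<in> E - T \<longrightarrow> f i j = (x i - x j) / r {i, j}) \<and>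
     (\<forall>i j. {i, j} \<notin> E \<longrightarrow> f i j = 0))"

text \<open>A fixed (arbitrary) orientation of an edge, used to evaluate f(e) and the Laplacian.\<close>
definition orient :: "'a set \<Rightarrow> 'a \<times> 'a" where
  "orient e = (SOME p. e = {fst p, snd p} \<and> fst p \<noteq> snd p)"

definition edge_val :: "('a \<Rightarrow> 'a \<Rightarrow> real) \<Rightarrow> 'a set \<Rightarrow> real" where
  "edge_val f e = f (fst (orient e)) (snd (orient e))"

definition energy :: "'a set set \<Rightarrow> ('a set \<Rightarrow> real) \<Rightarrow> ('a \<Rightarrow> 'a \<Rightarrow> real) \<Rightarrow> real" where
  "energy E r f = 1/2 * (\<Sum>e\<in>E. r e * (edge_val f e)^2)"

text \<open>(e_i - e_j) entry at vertex u, for e = {i,j} oriented as (i,j).\<close>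
definition inc :: "'a set \<Rightarrow> 'a \<Rightarrow> real" where
  "inc e u = (if u = fst (orient e) then 1 else if u = snd (orient e) then -1 else 0)"

definition laplacian :: "'a set set \<Rightarrow> ('a set \<Rightarrow> real) \<Rightarrow> 'a \<Rightarrow> 'a \<Rightarrow> real" where
  "laplacian E r u v = (\<Sum>e\<in>E. (1 / r e) * (inc e u * inc e v))"

definition dual_obj :: "'a set \<Rightarrow> 'a set set \<Rightarrow> ('a set \<Rightarrow> real) \<Rightarrow> ('a \<Rightarrow> real) \<Rightarrow> ('a \<Rightarrow> real) \<Rightarrow> real" where
  "dual_obj V E r b x = (\<Sum>i\<in>V. b i * x i) - 1/2 * (\<Sum>u\<in>V. \<Sum>v\<in>V. x u * laplacian E r u v * x v)"

definition gap :: "'a set \<Rightarrow> 'a set set \<Rightarrow> ('a set \<Rightarrow> real) \<Rightarrow> ('a \<Rightarrow> real) \<Rightarrow> ('a \<Rightarrow> 'a \<Rightarrow> real) \<Rightarrow> ('a \<Rightarrow> real) \<Rightarrow> real" where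
  "gap V E r b f x = energy E r f - dual_obj V E r b x"

end

theory Submission
  imports Defs
begin

text \<open>Completing the square edge by edge: for any \<open>b\<close>-flow \<open>f\<close> we have
  \<open>b\<^sup>T x = \<Sum>\<^sub>e f(e) (x\<^sub>i - x\<^sub>j)\<close> and \<open>x\<^sup>T L x = \<Sum>\<^sub>e (x\<^sub>i - x\<^sub>j)\<^sup>2 / r(e)\<close>, hence
  \<open>gap(f, x) = \<Sum>\<^sub>e r(e)/2 \<cdot> (f(e) - (x\<^sub>i - x\<^sub>j)/r(e))\<^sup>2\<close>. For the tree-defined flow this
  deviation vanishes off \<open>T\<close>. A tree edge \<open>(i, j)\<close> is the only tree edge leaving
  \<open>C = C(i, j)\<close>, so flow conservation summed over \<open>C\<close> gives deviation
  \<open>b(C) - f(C) = \<Delta>(C)/R(C)\<close>. Existence of the tree-defined flow comes from writing the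
  remaining demand as a combination of unit demands \<open>1\<^sub>v - 1\<^sub>\<rho>\<close>, each routed along a
  tree path; uniqueness from the same cut argument.\<close>

section \<open>Reachability and orientations\<close>

lemma reach_refl: "reach F u u"
  unfolding reach_def by simp

lemma reach_edge: "{u, v} \<in> F \<Longrightarrow> reach F u v"
  unfolding reach_def by (rule r_into_rtrancl) simp

lemma reach_trans: "reach F u v \<Longrightarrow> reach F v w \<Longrightarrow> reach F u w"
  unfolding reach_def by (rule rtrancl_trans)

lemma reach_sym: "reach F u v \<Longrightarrow> reach F v u"
  unfolding reach_def
proof (induction rule: rtrancl_induct)
  case (step y z)
  then have "(z, y) \<in> {(p, q). {p, q} \<in> F}" by (simp add: insert_commute)
  then show ?case using step.IH by (rule converse_rtrancl_into_rtrancl)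
qed simp

lemma reach_Diff_edge:
  assumes "reach F u v"
  shows "reach (F - {e}) u v \<or> (\<exists>a\<in>e. reach (F - {e}) u a) \<and> (\<exists>a\<in>e. reach (F - {e}) a v)"
  using assms unfolding reach_def[of F u v]
proof (induction rule: rtrancl_induct)
  case base
  show ?case by (simp add: reach_refl)
next
  case (step y z)
  show ?case
  proof (cases "{y, z} = e")
    case True
    then have "y \<in> e" "z \<in> e" by auto
    then show ?thesis using step.IH by (auto intro: reach_refl)
  next
    case False
    with step.hyps(2) have "reach (F - {e}) y z" by (intro reach_edge) simp
    then show ?thesis using step.IH by (meson reach_trans)
  qed
qed

lemma graph_wf_edge: "graph_wf V E \<Longrightarrow> {i, j} \<in> E \<Longrightarrow> i \<noteq> j \<and> i \<in> V \<and> j \<in> V"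
  unfolding graph_wf_def by (metis doubleton_eq_iff insert_iff)

lemma graph_wf_edgeE:
  assumes "graph_wf V E" "e \<in> E"
  obtains p q where "e = {p, q}" "p \<noteq> q" "p \<in> V" "q \<in> V"
  using assms unfolding graph_wf_def by blast

lemma graph_wf_finite_edges: "graph_wf V E \<Longrightarrow> finite E"
  unfolding graph_wf_def
  by (metis (no_types, lifting) Pow_iff empty_subsetI finite_Pow_iff finite_subset insert_subset subsetI)

lemma orient_doubleton: "i \<noteq> j \<Longrightarrow> orient {i, j} = (i, j) \<or> orient {i, j} = (j, i)"
proof -
  assume "i \<noteq> j"
  then have "\<exists>p. {i, j} = {fst p, snd p} \<and> fst p \<noteq> snd p" by (intro exI[of _ "(i, j)"]) simp
  then have "{i, j} = {fst (orient {i, j}), snd (orient {i, j})}"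
    unfolding orient_def by (rule someI_ex[THEN conjunct1])
  then show ?thesis by (metis doubleton_eq_iff prod.collapse)
qed

lemma orient_edgeE:
  assumes "graph_wf V E" "e \<in> E"
  obtains p q where "orient e = (p, q)" "e = {p, q}" "p \<noteq> q" "p \<in> V" "q \<in> V"
proof -
  obtain a b where ab: "e = {a, b}" "a \<noteq> b" "a \<in> V" "b \<in> V"
    using graph_wf_edgeE[OF assms] .
  from orient_doubleton[OF \<open>a \<noteq> b\<close>] show thesis
  proof
    assume "orient {a, b} = (a, b)"
    then show thesis using that[of a b] ab by simp
  next
    assume "orient {a, b} = (b, a)"
    then show thesis using that[of b a] ab by (simp add: insert_commute)
  qed
qed

lemma edge_val_antisym_square:
  assumes "i \<noteq> j" "f j i = - f i j"
  shows "(edge_val f {i, j})\<^sup>2 = (f i j)\<^sup>2"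
  using orient_doubleton[OF assms(1)]
proof
  assume "orient {i, j} = (j, i)"
  then show ?thesis using assms(2) by (simp add: edge_val_def)
qed (simp add: edge_val_def)

lemma inc_mult_edge_val:
  assumes "i \<noteq> j" "f j i = - f i j"
  shows "inc {i, j} i * edge_val f {i, j} = f i j"
  using orient_doubleton[OF assms(1)]
proof
  assume "orient {i, j} = (j, i)"
  then show ?thesis using assms by (simp add: inc_def edge_val_def)
qed (simp add: inc_def edge_val_def)

lemma sum_mult_inc:
  assumes "graph_wf V E" "e \<in> E"
  shows "(\<Sum>i\<in>V. x i * inc e i) = edge_val (\<lambda>i j. x i - x j) e"
proof -
  obtain p q where pq: "orient e = (p, q)" "p \<noteq> q" "p \<in> V" "q \<in> V"
    using orient_edgeE[OF assms] by metis
  have fin: "finite V" using assms(1) by (simp add: graph_wf_def)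
  have "(\<Sum>i\<in>V. x i * inc e i) = (\<Sum>i\<in>V. (if i = p then x i else 0) - (if i = q then x i else 0))"
    using pq by (intro sum.cong refl) (auto simp: inc_def)
  also have "\<dots> = x p - x q" using fin pq by (simp add: sum_subtractf sum.delta)
  finally show ?thesis using pq by (simp add: edge_val_def)
qed

section \<open>Flows and the duality gap\<close>

lemma sum_edges_within_antisym:
  fixes f :: "'a \<Rightarrow> 'a \<Rightarrow> real"
  assumes "finite C" and antisym: "\<forall>i j. {i, j} \<in> E \<longrightarrow> f j i = - f i j"
  shows "(\<Sum>k\<in>C. \<Sum>l\<in>{l\<in>C. {k, l} \<in> E}. f k l) = 0"
proof -
  define g where "g k l = (if {k, l} \<in> E then f k l else 0)" for k l
  have g_antisym: "g l k = - g k l" for k l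
  proof (cases "{k, l} \<in> E")
    case True
    have "{l, k} \<in> E" using True by (simp add: insert_commute)
    moreover have "f l k = - f k l" using antisym True by blast
    ultimately show ?thesis using True by (simp add: g_def)
  qed (simp add: g_def insert_commute)
  have "(\<Sum>k\<in>C. \<Sum>l\<in>C. g k l) = (\<Sum>l\<in>C. \<Sum>k\<in>C. g k l)" by (rule sum.swap)
  also have "\<dots> = (\<Sum>l\<in>C. \<Sum>k\<in>C. - g l k)" by (intro sum.cong refl g_antisym)
  also have "\<dots> = - (\<Sum>l\<in>C. \<Sum>k\<in>C. g l k)" by (simp add: sum_negf)
  finally have "(\<Sum>k\<in>C. \<Sum>l\<in>C. g k l) = 0" by simp
  then show ?thesis using \<open>finite C\<close> by (simp add: g_def sum.inter_filter)
qed

lemma bflow_out_of_set: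
  assumes wf: "graph_wf V E" and f: "is_bflow V E b f" and "C \<subseteq> V"
  shows "bset b C = (\<Sum>k\<in>C. \<Sum>l\<in>{l\<in>V - C. {k, l} \<in> E}. f k l)"
proof -
  have antisym: "\<forall>i j. {i, j} \<in> E \<longrightarrow> f j i = - f i j"
    and conservation: "\<forall>i\<in>V. (\<Sum>j\<in>{j\<in>V. {i, j} \<in> E}. f i j) = b i"
    using f unfolding is_bflow_def by blast+
  have "finite V" using wf by (simp add: graph_wf_def)
  then have "finite C" using \<open>C \<subseteq> V\<close> finite_subset by blast
  have split: "(\<Sum>l\<in>{l\<in>V. {k, l} \<in> E}. f k l)
      = (\<Sum>l\<in>{l\<in>C. {k, l} \<in> E}. f k l) + (\<Sum>l\<in>{l\<in>V - C. {k, l} \<in> E}. f k l)" for k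
  proof -
    have "{l\<in>V. {k, l} \<in> E} = {l\<in>C. {k, l} \<in> E} \<union> {l\<in>V - C. {k, l} \<in> E}"
      using \<open>C \<subseteq> V\<close> by auto
    then show ?thesis
      using \<open>finite V\<close> \<open>finite C\<close> by (subst sum.union_disjoint[symmetric]) auto
  qed
  have "bset b C = (\<Sum>k\<in>C. \<Sum>l\<in>{l\<in>V. {k, l} \<in> E}. f k l)"
    using conservation \<open>C \<subseteq> V\<close> unfolding bset_def by (intro sum.cong refl) auto
  also have "\<dots> = (\<Sum>k\<in>C. \<Sum>l\<in>{l\<in>C. {k, l} \<in> E}. f k l)
      + (\<Sum>k\<in>C. \<Sum>l\<in>{l\<in>V - C. {k, l} \<in> E}. f k l)"
    by (simp add: split sum.distrib)
  also have "(\<Sum>k\<in>C. \<Sum>l\<in>{l\<in>C. {k, l} \<in> E}. f k l) = 0"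
    by (rule sum_edges_within_antisym[OF \<open>finite C\<close> antisym])
  finally show ?thesis by simp
qed

lemma sum_neighbours_eq_sum_incident_edges:
  assumes wf: "graph_wf V E"
  shows "(\<Sum>j\<in>{j\<in>V. {i, j} \<in> E}. G {i, j}) = (\<Sum>e\<in>{e\<in>E. i \<in> e}. G e)"
proof (rule sum.reindex_bij_betw)
  show "bij_betw (\<lambda>j. {i, j}) {j\<in>V. {i, j} \<in> E} {e\<in>E. i \<in> e}"
  proof (rule bij_betw_imageI)
    show "inj_on (\<lambda>j. {i, j}) {j\<in>V. {i, j} \<in> E}"
      by (rule inj_onI) (metis doubleton_eq_iff)
    show "(\<lambda>j. {i, j}) ` {j\<in>V. {i, j} \<in> E} = {e\<in>E. i \<in> e}"
    proof (intro equalityI subsetI)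
      fix e assume e: "e \<in> {e\<in>E. i \<in> e}"
      then obtain p q where pq: "e = {p, q}" "p \<in> V" "q \<in> V"
        using graph_wf_edgeE[OF wf] by blast
      then have "e = {i, p} \<and> p \<in> V \<or> e = {i, q} \<and> q \<in> V"
        using e by (auto simp: insert_commute)
      then show "e \<in> (\<lambda>j. {i, j}) ` {j\<in>V. {i, j} \<in> E}" using e by auto
    qed auto
  qed
qed

lemma bflow_eq_sum_incidence:
  assumes wf: "graph_wf V E" and f: "is_bflow V E b f" and "i \<in> V"
  shows "b i = (\<Sum>e\<in>E. inc e i * edge_val f e)"
proof -
  have "b i = (\<Sum>j\<in>{j\<in>V. {i, j} \<in> E}. f i j)"
    using f \<open>i \<in> V\<close> by (simp add: is_bflow_def)
  also have "\<dots> = (\<Sum>j\<in>{j\<in>V. {i, j} \<in> E}. inc {i, j} i * edge_val f {i, j})"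
  proof (intro sum.cong refl)
    fix j assume "j \<in> {j\<in>V. {i, j} \<in> E}"
    then have "i \<noteq> j" "f j i = - f i j"
      using graph_wf_edge[OF wf] f unfolding is_bflow_def by blast+
    then show "f i j = inc {i, j} i * edge_val f {i, j}" by (simp add: inc_mult_edge_val)
  qed
  also have "\<dots> = (\<Sum>e\<in>{e\<in>E. i \<in> e}. inc e i * edge_val f e)"
    by (rule sum_neighbours_eq_sum_incident_edges[OF wf])
  also have "\<dots> = (\<Sum>e\<in>E. inc e i * edge_val f e)"
  proof (rule sum.mono_neutral_left[OF graph_wf_finite_edges[OF wf]])
    show "\<forall>e\<in>E - {e\<in>E. i \<in> e}. inc e i * edge_val f e = 0"
    proof
      fix e assume e: "e \<in> E - {e\<in>E. i \<in> e}"
      then obtain p q where "orient e = (p, q)" "e = {p, q}"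
        using orient_edgeE[OF wf] by (metis DiffD1)
      then show "inc e i * edge_val f e = 0" using e by (auto simp: inc_def)
    qed
  qed auto
  finally show ?thesis .
qed

lemma bflow_inner_potential:
  assumes wf: "graph_wf V E" and f: "is_bflow V E b f"
  shows "(\<Sum>i\<in>V. b i * x i) = (\<Sum>e\<in>E. edge_val f e * edge_val (\<lambda>i j. x i - x j) e)"
proof -
  have "(\<Sum>i\<in>V. b i * x i) = (\<Sum>i\<in>V. (\<Sum>e\<in>E. inc e i * edge_val f e) * x i)"
    using bflow_eq_sum_incidence[OF wf f] by simp
  also have "\<dots> = (\<Sum>i\<in>V. \<Sum>e\<in>E. edge_val f e * (x i * inc e i))"
    by (simp add: sum_distrib_left sum_distrib_right mult_ac)
  also have "\<dots> = (\<Sum>e\<in>E. edge_val f e * (\<Sum>i\<in>V. x i * inc e i))"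
    by (subst sum.swap) (simp add: sum_distrib_left)
  also have "\<dots> = (\<Sum>e\<in>E. edge_val f e * edge_val (\<lambda>i j. x i - x j) e)"
    using sum_mult_inc[OF wf] by simp
  finally show ?thesis .
qed

lemma laplacian_quadratic_form:
  assumes wf: "graph_wf V E"
  shows "(\<Sum>u\<in>V. \<Sum>v\<in>V. x u * laplacian E r u v * x v)
    = (\<Sum>e\<in>E. 1 / r e * (edge_val (\<lambda>i j. x i - x j) e)\<^sup>2)"
proof -
  have "(\<Sum>u\<in>V. \<Sum>v\<in>V. x u * laplacian E r u v * x v)
      = (\<Sum>u\<in>V. \<Sum>v\<in>V. \<Sum>e\<in>E. 1 / r e * ((x u * inc e u) * (x v * inc e v)))"
    unfolding laplacian_def by (simp add: sum_distrib_left sum_distrib_right mult_ac)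
  also have "\<dots> = (\<Sum>e\<in>E. \<Sum>u\<in>V. \<Sum>v\<in>V. 1 / r e * ((x u * inc e u) * (x v * inc e v)))"
    by (subst sum.swap) (simp add: sum.swap[of _ V E])
  also have "\<dots> = (\<Sum>e\<in>E. 1 / r e * ((\<Sum>u\<in>V. x u * inc e u) * (\<Sum>v\<in>V. x v * inc e v)))"
    by (simp add: sum_distrib_left sum_distrib_right mult_ac)
  also have "\<dots> = (\<Sum>e\<in>E. 1 / r e * (edge_val (\<lambda>i j. x i - x j) e)\<^sup>2)"
    using sum_mult_inc[OF wf] by (simp add: power2_eq_square)
  finally show ?thesis .
qed

definition flow_deviation :: "('a set \<Rightarrow> real) \<Rightarrow> ('a \<Rightarrow> real) \<Rightarrow> ('a \<Rightarrow> 'a \<Rightarrow> real) \<Rightarrow> 'a \<Rightarrow> 'a \<Rightarrow> real"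
  where "flow_deviation r x f i j = f i j - (x i - x j) / r {i, j}"

lemma gap_eq_sum_flow_deviation:
  assumes wf: "graph_wf V E" and r: "\<forall>e\<in>E. r e > 0" and f: "is_bflow V E b f"
  shows "gap V E r b f x = (\<Sum>e\<in>E. r e / 2 * (edge_val (flow_deviation r x f) e)\<^sup>2)"
proof -
  let ?p = "edge_val (\<lambda>i j. x i - x j)"
  have "r e / 2 * (edge_val (flow_deviation r x f) e)\<^sup>2
      = 1/2 * (r e * (edge_val f e)\<^sup>2) - edge_val f e * ?p e + 1/2 * (1 / r e * (?p e)\<^sup>2)"
    if "e \<in> E" for e
  proof -
    obtain p q where pq: "orient e = (p, q)" "e = {p, q}"
      using orient_edgeE[OF wf \<open>e \<in> E\<close>] by metis
    have dev: "edge_val (flow_deviation r x f) e = edge_val f e - ?p e / r e"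
      using pq by (simp add: edge_val_def flow_deviation_def)
    have "r e > 0" using r \<open>e \<in> E\<close> by blast
    then show ?thesis unfolding dev by (simp add: field_simps power2_eq_square)
  qed
  then have "(\<Sum>e\<in>E. r e / 2 * (edge_val (flow_deviation r x f) e)\<^sup>2)
      = (\<Sum>e\<in>E. 1/2 * (r e * (edge_val f e)\<^sup>2) - edge_val f e * ?p e + 1/2 * (1 / r e * (?p e)\<^sup>2))"
    by (rule sum.cong[OF refl])
  also have "\<dots> = 1/2 * (\<Sum>e\<in>E. r e * (edge_val f e)\<^sup>2) - (\<Sum>e\<in>E. edge_val f e * ?p e)
        + 1/2 * (\<Sum>e\<in>E. 1 / r e * (?p e)\<^sup>2)"
    by (simp only: sum.distrib sum_subtractf sum_distrib_left)
  finally show ?thesis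
    unfolding gap_def energy_def dual_obj_def bflow_inner_potential[OF wf f]
      laplacian_quadratic_form[OF wf] by simp
qed

section \<open>Cuts of a spanning tree\<close>

lemma spanning_tree_subset: "spanning_tree V E T \<Longrightarrow> T \<subseteq> E"
  by (simp add: spanning_tree_def)

lemma spanning_tree_edge_orientation:
  assumes wf: "graph_wf V E" and T: "spanning_tree V E T" and "\<rho> \<in> V" and "e \<in> T"
  obtains t h where "e = {t, h}" "t \<in> V" "h \<in> V"
    "\<not> reach (T - {e}) \<rho> t" "reach (T - {e}) \<rho> h"
proof -
  have conn: "connected_on V T" and min: "\<not> connected_on V (T - {e})"
    using T \<open>e \<in> T\<close> by (auto simp: spanning_tree_def)
  obtain a b where ab: "e = {a, b}" "a \<in> V" "b \<in> V"
    using graph_wf_edgeE[OF wf] \<open>e \<in> T\<close> spanning_tree_subset[OF T] by blast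
  let ?F = "T - {e}"
  have to_vertex: "reach ?F \<rho> v \<or> reach ?F a v \<or> reach ?F b v" if "v \<in> V" for v
    using reach_Diff_edge[of T \<rho> v e] conn \<open>\<rho> \<in> V\<close> that ab by (auto simp: connected_on_def)
  have "\<not> (reach ?F \<rho> a \<and> reach ?F \<rho> b)"
  proof
    assume "reach ?F \<rho> a \<and> reach ?F \<rho> b"
    then have "reach ?F \<rho> v" if "v \<in> V" for v
      using to_vertex[OF that] by (meson reach_trans)
    then have "connected_on V ?F"
      unfolding connected_on_def by (meson reach_sym reach_trans)
    with min show False by contradiction
  qed
  moreover have "reach ?F \<rho> a \<or> reach ?F \<rho> b"
    using reach_Diff_edge[of T \<rho> a e] conn \<open>\<rho> \<in> V\<close> ab by (auto simp: connected_on_def)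
  ultimately show thesis
    using that[of a b] that[of b a] ab by (auto simp: insert_commute)
qed

lemma spanning_tree_edge_cut:
  assumes wf: "graph_wf V E" and T: "spanning_tree V E T" and "\<rho> \<in> V" and "e \<in> T"
  obtains t h C where "e = {t, h}" "t \<in> C" "h \<in> V - C" "C \<subseteq> V" "treeC V T \<rho> e = C"
    "\<And>k l. {k, l} \<in> T \<Longrightarrow> k \<in> C \<Longrightarrow> l \<in> V - C \<Longrightarrow> k = t \<and> l = h"
proof -
  obtain t h where e: "e = {t, h}" "t \<in> V" "h \<in> V"
    and t: "\<not> reach (T - {e}) \<rho> t" and h: "reach (T - {e}) \<rho> h"
    using spanning_tree_edge_orientation[OF assms] .
  define C where "C = comp V (T - {e}) t"
  have "tail_toward_root V T \<rho> e = t"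
    unfolding tail_toward_root_def
  proof (rule the_equality)
    show "t \<in> e \<and> t \<notin> comp V (T - {e}) \<rho>" using e t by (simp add: comp_def)
    show "i = t" if "i \<in> e \<and> i \<notin> comp V (T - {e}) \<rho>" for i
      using that e h by (auto simp: comp_def)
  qed
  then have "treeC V T \<rho> e = C" by (simp add: treeC_def C_def)
  moreover have "t \<in> C" using e by (simp add: C_def comp_def reach_refl)
  moreover have "h \<notin> C"
  proof
    assume "h \<in> C"
    then have "reach (T - {e}) h t" by (simp add: C_def comp_def reach_sym)
    with h t show False by (blast intro: reach_trans)
  qed
  moreover have "k = t \<and> l = h" if kl: "{k, l} \<in> T" "k \<in> C" "l \<in> V - C" for k l
  proof -
    have "{k, l} = e"
    proof (rule ccontr)
      assume "{k, l} \<noteq> e"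
      then have "reach (T - {e}) k l" using kl(1) by (intro reach_edge) simp
      moreover have "reach (T - {e}) t k" using kl(2) by (simp add: C_def comp_def)
      ultimately have "l \<in> C" using kl(3) by (auto simp: C_def comp_def intro: reach_trans)
      then show False using kl(3) by simp
    qed
    then have "k = t \<and> l = h \<or> k = h \<and> l = t" using e by (simp add: doubleton_eq_iff)
    then show ?thesis using kl(2) \<open>h \<notin> C\<close> by blast
  qed
  moreover have "C \<subseteq> V" by (simp add: C_def comp_def)
  ultimately show thesis
    using that[of t h C] e by blast
qed

section \<open>The tree-defined flow\<close>

definition is_tree_flow :: "'a set \<Rightarrow> 'a set set \<Rightarrow> ('a set \<Rightarrow> real) \<Rightarrow> ('a \<Rightarrow> real) \<Rightarrow> 'a set set
    \<Rightarrow> ('a \<Rightarrow> real) \<Rightarrow> ('a \<Rightarrow> 'a \<Rightarrow> real) \<Rightarrow> bool" where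
  "is_tree_flow V E r b T x f \<longleftrightarrow> is_bflow V E b f \<and>
     (\<forall>i j. {i, j} \<in> E - T \<longrightarrow> f i j = (x i - x j) / r {i, j}) \<and>
     (\<forall>i j. {i, j} \<notin> E \<longrightarrow> f i j = 0)"

lemma tree_flow_eq_The: "tree_flow V E r b T x = (THE f. is_tree_flow V E r b T x f)"
  by (simp add: tree_flow_def is_tree_flow_def)

lemma is_tree_flow_deviation_crossing_edge:
  assumes wf: "graph_wf V E" and "T \<subseteq> E" and f: "is_tree_flow V E r b T x f"
    and "{t, h} \<in> T" "t \<in> C" "h \<in> V - C" "C \<subseteq> V"
    and crossing: "\<And>k l. {k, l} \<in> T \<Longrightarrow> k \<in> C \<Longrightarrow> l \<in> V - C \<Longrightarrow> k = t \<and> l = h"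
  shows "flow_deviation r x f t h = bset b C - fset V E r x C"
proof -
  have "finite V" using wf by (simp add: graph_wf_def)
  have "finite C" using \<open>finite V\<close> \<open>C \<subseteq> V\<close> finite_subset by blast
  let ?c = "flow_deviation r x f t h"
  have edge_value: "f k l = (x k - x l) / r {k, l} + (if k = t \<and> l = h then ?c else 0)"
    if "k \<in> C" "l \<in> {l\<in>V - C. {k, l} \<in> E}" for k l
  proof (cases "{k, l} \<in> T")
    case True
    then show ?thesis using crossing that by (simp add: flow_deviation_def)
  next
    case False
    then have "f k l = (x k - x l) / r {k, l}"
      using f that(2) by (simp add: is_tree_flow_def)
    then show ?thesis using False \<open>{t, h} \<in> T\<close> by auto
  qed
  have "is_bflow V E b f" using f by (simp add: is_tree_flow_def)
  then have "bset b C = (\<Sum>k\<in>C. \<Sum>l\<in>{l\<in>V - C. {k, l} \<in> E}. f k l)"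
    using bflow_out_of_set[OF wf _ \<open>C \<subseteq> V\<close>] by blast
  also have "\<dots> = (\<Sum>k\<in>C. \<Sum>l\<in>{l\<in>V - C. {k, l} \<in> E}.
      (x k - x l) / r {k, l} + (if k = t \<and> l = h then ?c else 0))"
    by (intro sum.cong refl edge_value)
  also have "\<dots> = fset V E r x C
      + (\<Sum>k\<in>C. \<Sum>l\<in>{l\<in>V - C. {k, l} \<in> E}. if k = t \<and> l = h then ?c else 0)"
    unfolding fset_def by (simp add: sum.distrib)
  also have "(\<Sum>k\<in>C. \<Sum>l\<in>{l\<in>V - C. {k, l} \<in> E}. if k = t \<and> l = h then ?c else 0) = ?c"
  proof -
    have "h \<in> {l\<in>V - C. {t, l} \<in> E}" using \<open>h \<in> V - C\<close> \<open>{t, h} \<in> T\<close> \<open>T \<subseteq> E\<close> by auto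
    then have "(\<Sum>l\<in>{l\<in>V - C. {k, l} \<in> E}. if k = t \<and> l = h then ?c else 0)
        = (if k = t then ?c else 0)" for k
      using \<open>finite V\<close> by (cases "k = t") (simp_all add: sum.delta)
    then show ?thesis using \<open>finite C\<close> \<open>t \<in> C\<close> by (simp add: sum.delta)
  qed
  finally show ?thesis by simp
qed

lemma is_tree_flow_unique:
  assumes wf: "graph_wf V E" and T: "spanning_tree V E T" and "\<rho> \<in> V"
    and f1: "is_tree_flow V E r b T x f1" and f2: "is_tree_flow V E r b T x f2"
  shows "f1 = f2"
proof (intro ext)
  fix i j
  show "f1 i j = f2 i j"
  proof (cases "{i, j} \<in> T")
    case True
    obtain t h C where th: "{i, j} = {t, h}" "t \<in> C" "h \<in> V - C" "C \<subseteq> V"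
      "treeC V T \<rho> {i, j} = C"
      and crossing: "\<And>k l. {k, l} \<in> T \<Longrightarrow> k \<in> C \<Longrightarrow> l \<in> V - C \<Longrightarrow> k = t \<and> l = h"
      using spanning_tree_edge_cut[OF wf T \<open>\<rho> \<in> V\<close> True] by blast
    have "{t, h} \<in> T" using True th(1) by simp
    then have "{t, h} \<in> E" using spanning_tree_subset[OF T] by blast
    note deviation = is_tree_flow_deviation_crossing_edge[OF wf spanning_tree_subset[OF T] _
        \<open>{t, h} \<in> T\<close> th(2-4) crossing]
    have "f1 t h = f2 t h"
      using deviation[OF f1] deviation[OF f2] by (simp add: flow_deviation_def)
    moreover have "f1 h t = - f1 t h" "f2 h t = - f2 t h"
      using f1 f2 \<open>{t, h} \<in> E\<close> unfolding is_tree_flow_def is_bflow_def by blast+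
    ultimately show ?thesis using th(1) by (auto simp: doubleton_eq_iff)
  next
    case False
    then show ?thesis using f1 f2 unfolding is_tree_flow_def by (metis DiffI)
  qed
qed

definition tree_realizable :: "'a set \<Rightarrow> 'a set set \<Rightarrow> 'a set set \<Rightarrow> ('a \<Rightarrow> real) \<Rightarrow> bool" where
  "tree_realizable V E T d \<longleftrightarrow> (\<exists>g. (\<forall>i j. g j i = - g i j) \<and> (\<forall>i j. {i, j} \<notin> T \<longrightarrow> g i j = 0) \<and>
     (\<forall>i\<in>V. (\<Sum>j\<in>{j\<in>V. {i, j} \<in> E}. g i j) = d i))"

lemma tree_realizable_zero: "tree_realizable V E T (\<lambda>i. 0)"
  unfolding tree_realizable_def by (rule exI[of _ "\<lambda>i j. 0"]) simp

lemma tree_realizable_add_scaled: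
  assumes "tree_realizable V E T d1" "tree_realizable V E T d2"
  shows "tree_realizable V E T (\<lambda>i. c * d1 i + d2 i)"
proof -
  obtain g1 g2 where g1: "\<forall>i j. g1 j i = - g1 i j" "\<forall>i j. {i, j} \<notin> T \<longrightarrow> g1 i j = 0"
      "\<forall>i\<in>V. (\<Sum>j\<in>{j\<in>V. {i, j} \<in> E}. g1 i j) = d1 i"
    and g2: "\<forall>i j. g2 j i = - g2 i j" "\<forall>i j. {i, j} \<notin> T \<longrightarrow> g2 i j = 0"
      "\<forall>i\<in>V. (\<Sum>j\<in>{j\<in>V. {i, j} \<in> E}. g2 i j) = d2 i"
    using assms unfolding tree_realizable_def by blast
  show ?thesis
    unfolding tree_realizable_def
  proof (intro exI[of _ "\<lambda>i j. c * g1 i j + g2 i j"] conjI allI impI ballI)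
    show "c * g1 j i + g2 j i = - (c * g1 i j + g2 i j)" for i j
      using g1(1)[rule_format, of i j] g2(1)[rule_format, of i j] by simp
    show "c * g1 i j + g2 i j = 0" if "{i, j} \<notin> T" for i j
      using g1(2) g2(2) that by simp
    show "(\<Sum>j\<in>{j\<in>V. {i, j} \<in> E}. c * g1 i j + g2 i j) = c * d1 i + d2 i" if "i \<in> V" for i
      using g1(3) g2(3) that by (simp add: sum.distrib sum_distrib_left[symmetric])
  qed
qed

lemma tree_realizable_sum:
  assumes "finite A" and "\<And>a. a \<in> A \<Longrightarrow> tree_realizable V E T (D a)"
  shows "tree_realizable V E T (\<lambda>i. \<Sum>a\<in>A. c a * D a i)"
  using assms
proof (induction A rule: finite_induct)
  case empty
  show ?case using tree_realizable_zero by simp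
next
  case (insert a A)
  then have "tree_realizable V E T (\<lambda>i. c a * D a i + (\<Sum>a\<in>A. c a * D a i))"
    by (intro tree_realizable_add_scaled) auto
  then show ?case using insert.hyps by simp
qed

lemma tree_realizable_edge:
  assumes wf: "graph_wf V E" and "T \<subseteq> E" and "{u, v} \<in> T"
  shows "tree_realizable V E T (\<lambda>i. of_bool (i = u) - of_bool (i = v))"
proof -
  have "{u, v} \<in> E" "{v, u} \<in> E" using assms by (simp_all add: insert_commute subsetD)
  have "finite V" using wf by (simp add: graph_wf_def)
  define g where "g i j = (of_bool (i = u \<and> j = v) - of_bool (i = v \<and> j = u) :: real)" for i j
  show ?thesis
    unfolding tree_realizable_def
  proof (intro exI[of _ g] conjI allI impI ballI)
    show "g j i = - g i j" for i j
      unfolding g_def by (simp add: conj_commute)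
    show "g i j = 0" if "{i, j} \<notin> T" for i j
    proof -
      have "\<not> (i = u \<and> j = v)" "\<not> (i = v \<and> j = u)"
        using that \<open>{u, v} \<in> T\<close> by (metis insert_commute)+
      then show ?thesis unfolding g_def by auto
    qed
    fix i assume "i \<in> V"
    let ?N = "{j\<in>V. {i, j} \<in> E}"
    have "v \<in> ?N" if "i = u" using that \<open>{u, v} \<in> E\<close> graph_wf_edge[OF wf] by blast
    then have "(\<Sum>j\<in>?N. of_bool (i = u \<and> j = v)) = (of_bool (i = u) :: real)"
      using \<open>finite V\<close> by (cases "i = u") (simp_all add: of_bool_def sum.delta)
    moreover have "u \<in> ?N" if "i = v" using that \<open>{v, u} \<in> E\<close> graph_wf_edge[OF wf] by blast
    then have "(\<Sum>j\<in>?N. of_bool (i = v \<and> j = u)) = (of_bool (i = v) :: real)"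
      using \<open>finite V\<close> by (cases "i = v") (simp_all add: of_bool_def sum.delta)
    ultimately show "(\<Sum>j\<in>?N. g i j) = of_bool (i = u) - of_bool (i = v)"
      by (simp add: g_def sum_subtractf)
  qed
qed

lemma tree_realizable_reach:
  assumes wf: "graph_wf V E" and "T \<subseteq> E" and "reach T u v"
  shows "tree_realizable V E T (\<lambda>i. of_bool (i = u) - of_bool (i = v))"
  using \<open>reach T u v\<close> unfolding reach_def[of T u v]
proof (induction rule: rtrancl_induct)
  case base
  show ?case using tree_realizable_zero by simp
next
  case (step y z)
  then have "tree_realizable V E T (\<lambda>i. of_bool (i = y) - of_bool (i = z))"
    by (intro tree_realizable_edge[OF wf \<open>T \<subseteq> E\<close>]) simp
  from tree_realizable_add_scaled[OF step.IH this, of 1] show ?case by simp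
qed

lemma tree_realizable_balanced:
  assumes wf: "graph_wf V E" and T: "spanning_tree V E T" and "\<rho> \<in> V"
    and balanced: "(\<Sum>i\<in>V. d i) = 0"
  shows "tree_realizable V E T d"
proof -
  have "finite V" using wf by (simp add: graph_wf_def)
  have "tree_realizable V E T (\<lambda>i. of_bool (i = v) - of_bool (i = \<rho>))"
    if "v \<in> V" for v
    using T \<open>\<rho> \<in> V\<close> that unfolding spanning_tree_def connected_on_def
    by (intro tree_realizable_reach[OF wf]) auto
  then have "tree_realizable V E T
      (\<lambda>i. \<Sum>v\<in>V. d v * (of_bool (i = v) - of_bool (i = \<rho>)))"
    by (rule tree_realizable_sum[OF \<open>finite V\<close>])
  moreover have "(\<Sum>v\<in>V. d v * (of_bool (i = v) - of_bool (i = \<rho>))) = d i"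
    if "i \<in> V" for i
    using \<open>finite V\<close> that balanced
    by (simp add: right_diff_distrib sum_subtractf sum.delta sum_distrib_right[symmetric])
  ultimately show ?thesis
    unfolding tree_realizable_def by simp
qed

lemma is_tree_flow_exists:
  assumes wf: "graph_wf V E" and T: "spanning_tree V E T" and "\<rho> \<in> V"
    and balanced: "(\<Sum>i\<in>V. b i) = 0"
  shows "\<exists>f. is_tree_flow V E r b T x f"
proof -
  have "finite V" using wf by (simp add: graph_wf_def)
  define p where "p i j = (if {i, j} \<in> E - T then (x i - x j) / r {i, j} else 0)" for i j
  have p_antisym: "p j i = - p i j" for i j
    unfolding p_def by (simp add: insert_commute minus_divide_left)
  define d where "d i = b i - (\<Sum>j\<in>{j\<in>V. {i, j} \<in> E}. p i j)" for i
  have "(\<Sum>i\<in>V. \<Sum>j\<in>{j\<in>V. {i, j} \<in> E}. p i j) = 0"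
    using sum_edges_within_antisym[OF \<open>finite V\<close>] p_antisym by blast
  then have "(\<Sum>i\<in>V. d i) = 0" using balanced by (simp add: d_def sum_subtractf)
  then obtain g where g_antisym: "\<forall>i j. g j i = - g i j"
    and g_tree: "\<forall>i j. {i, j} \<notin> T \<longrightarrow> g i j = 0"
    and g_out: "\<forall>i\<in>V. (\<Sum>j\<in>{j\<in>V. {i, j} \<in> E}. g i j) = d i"
    using tree_realizable_balanced[OF wf T \<open>\<rho> \<in> V\<close>] unfolding tree_realizable_def by blast
  have "is_tree_flow V E r b T x (\<lambda>i j. p i j + g i j)"
    unfolding is_tree_flow_def is_bflow_def
  proof (intro conjI allI impI ballI)
    show "p j i + g j i = - (p i j + g i j)" for i j
      using p_antisym[of i j] g_antisym[rule_format, of i j] by simp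
    show "(\<Sum>j\<in>{j\<in>V. {i, j} \<in> E}. p i j + g i j) = b i" if "i \<in> V" for i
      using g_out that by (simp add: sum.distrib d_def)
    show "p i j + g i j = (x i - x j) / r {i, j}" if "{i, j} \<in> E - T" for i j
      using that g_tree by (simp add: p_def)
    show "p i j + g i j = 0" if "{i, j} \<notin> E" for i j
      using that g_tree spanning_tree_subset[OF T] by (auto simp: p_def)
  qed
  then show ?thesis by blast
qed

lemma tree_flow_is_tree_flow:
  assumes "graph_wf V E" "spanning_tree V E T" "\<rho> \<in> V" "(\<Sum>i\<in>V. b i) = 0"
  shows "is_tree_flow V E r b T x (tree_flow V E r b T x)"
proof -
  have "\<exists>!f. is_tree_flow V E r b T x f"
    using is_tree_flow_exists[OF assms] is_tree_flow_unique[OF assms(1-3)] by blast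
  then show ?thesis unfolding tree_flow_eq_The by (rule theI')
qed

lemma tree_flow_deviation_nontree_edge:
  assumes wf: "graph_wf V E" and f: "is_tree_flow V E r b T x f" and "e \<in> E - T"
  shows "edge_val (flow_deviation r x f) e = 0"
proof -
  obtain p q where "orient e = (p, q)" "e = {p, q}"
    using orient_edgeE[OF wf] \<open>e \<in> E - T\<close> by (metis DiffD1)
  then show ?thesis
    using f \<open>e \<in> E - T\<close> by (simp add: edge_val_def flow_deviation_def is_tree_flow_def)
qed

lemma Rcut_pos:
  assumes "finite E" and "\<forall>e\<in>E. r e > 0" and "e \<in> cut E C"
  shows "Rcut E r C > 0"
proof -
  have "finite (cut E C)" "\<forall>e\<in>cut E C. 0 \<le> 1 / r e"
    using assms by (auto simp: cut_def less_imp_le)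
  moreover have "0 < 1 / r e" using assms by (simp add: cut_def)
  ultimately have "0 < (\<Sum>e\<in>cut E C. 1 / r e)"
    using \<open>e \<in> cut E C\<close> by (intro sum_pos2) auto
  then show ?thesis by (simp add: Rcut_def)
qed

lemma tree_flow_deviation_tree_edge:
  assumes wf: "graph_wf V E" and T: "spanning_tree V E T" and "\<rho> \<in> V" and r: "\<forall>e\<in>E. r e > 0"
    and f: "is_tree_flow V E r b T x f" and "e \<in> T"
  shows "(edge_val (flow_deviation r x f) e)\<^sup>2
    = (Delta V E r b x (treeC V T \<rho> e) / Rcut E r (treeC V T \<rho> e))\<^sup>2"
proof -
  obtain t h C where e: "e = {t, h}" "t \<in> C" "h \<in> V - C" "C \<subseteq> V" "treeC V T \<rho> e = C"
    and crossing: "\<And>k l. {k, l} \<in> T \<Longrightarrow> k \<in> C \<Longrightarrow> l \<in> V - C \<Longrightarrow> k = t \<and> l = h"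
    using spanning_tree_edge_cut[OF wf T \<open>\<rho> \<in> V\<close> \<open>e \<in> T\<close>] by blast
  have "e \<in> E" using \<open>e \<in> T\<close> spanning_tree_subset[OF T] by blast
  have "t \<noteq> h" using e by blast
  have deviation: "flow_deviation r x f t h = bset b C - fset V E r x C"
    using is_tree_flow_deviation_crossing_edge[OF wf spanning_tree_subset[OF T] f _ e(2-4) crossing]
      \<open>e \<in> T\<close> e(1) by blast
  have "f h t = - f t h"
    using f \<open>e \<in> E\<close> e(1) unfolding is_tree_flow_def is_bflow_def by blast
  then have "flow_deviation r x f h t = - flow_deviation r x f t h"
    by (simp add: flow_deviation_def insert_commute minus_divide_left)
  then have "(edge_val (flow_deviation r x f) e)\<^sup>2 = (bset b C - fset V E r x C)\<^sup>2"
    using edge_val_antisym_square[OF \<open>t \<noteq> h\<close>] deviation e(1) by simp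
  moreover have "e \<in> cut E C"
    using \<open>e \<in> E\<close> e(1-3) by (simp add: cut_def)
  then have "Rcut E r C > 0"
    using Rcut_pos[OF graph_wf_finite_edges[OF wf] r] by blast
  ultimately show ?thesis using e(5) by (simp add: Delta_def)
qed

theorem mainTheorem11:
  fixes V :: "'a set" and E T :: "'a set set" and r :: "'a set \<Rightarrow> real"
    and b x :: "'a \<Rightarrow> real" and \<rho> :: 'a
  assumes "graph_wf V E"
    and "connected_on V E"
    and "\<forall>e\<in>E. r e > 0"
    and "(\<Sum>i\<in>V. b i) = 0"
    and "\<rho> \<in> V"
    and "spanning_tree V E T"
  shows "gap V E r b (tree_flow V E r b T x) x =
    1/2 * (\<Sum>e\<in>T. r e * (Delta V E r b x (treeC V T \<rho> e))^2 / (Rcut E r (treeC V T \<rho> e))^2)"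
proof -
  note wf = assms(1) and r = assms(3) and T = assms(6)
  let ?f = "tree_flow V E r b T x" and ?C = "treeC V T \<rho>"
  have f: "is_tree_flow V E r b T x ?f"
    by (rule tree_flow_is_tree_flow[OF wf T assms(5,4)])
  have "gap V E r b ?f x = (\<Sum>e\<in>E. r e / 2 * (edge_val (flow_deviation r x ?f) e)\<^sup>2)"
    using gap_eq_sum_flow_deviation[OF wf r] f by (simp add: is_tree_flow_def)
  also have "\<dots> = (\<Sum>e\<in>T. r e / 2 * (edge_val (flow_deviation r x ?f) e)\<^sup>2)"
    using tree_flow_deviation_nontree_edge[OF wf f] spanning_tree_subset[OF T]
      graph_wf_finite_edges[OF wf]
    by (intro sum.mono_neutral_right) auto
  also have "\<dots> = (\<Sum>e\<in>T. r e / 2 * (Delta V E r b x (?C e) / Rcut E r (?C e))\<^sup>2)"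
    using tree_flow_deviation_tree_edge[OF wf T assms(5) r f] by simp
  finally show ?thesis
    by (simp add: sum_distrib_left power_divide)
qed

end
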